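(* Let $n \ge 1$ be an integer, let $X_1,\dots,X_n$ be i.i.d. Bernoulli random variables with $\Pr\{X_i=1\}=p\in(0,1)$, and let $K=\sum_{i=1}^n X_i$. For $\delta\in(0,1)$ define \[ L_{n,\delta} = \frac{K}{n} + \frac{3}{4}\,\frac{1-\frac{2K}{n}-\sqrt{1+\frac{9}{2\ln\frac{2}{\delta}}\,K\left(1-\frac{K}{n}\right)}}{1+\frac{9n}{8\ln\frac{2}{\delta}}},\qquad U_{n,\delta} = \frac{K}{n} + \frac{3}{4}\,\frac{1-\frac{2K}{n}+\sqrt{1+\frac{9}{2\ln\frac{2}{\delta}}\,K\left(1-\frac{K}{n}\right)}}{1+\frac{9n}{8\ln\frac{2}{\delta}}}. \] Then for any fixed $n$ and $p\in(0,1)$, the coverage probability of the confidence interval $[L_{n,\delta},U_{n,\delta}]$, i.e. $\Pr\{L_{n,\delta}\le p\le U_{n,\delta}\mid p\}$, decreases as $\delta$ increases.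
   Context: $\Pr\{\cdot\mid p\}$ denotes probability when the Bernoulli parameter equals $p$, so that $K$ is binomially distributed with parameters $n$ and $p$. *)

theory Defs
  imports "HOL-Probability.Probability"
begin

definition L_bound :: "nat \<Rightarrow> real \<Rightarrow> nat \<Rightarrow> real" where
  "L_bound n \<delta> k = real k / real n + 3/4 *
     ((1 - 2 * real k / real n
        - sqrt (1 + 9 / (2 * ln (2 / \<delta>)) * real k * (1 - real k / real n)))
      / (1 + 9 * real n / (8 * ln (2 / \<delta>))))"

definition U_bound :: "nat \<Rightarrow> real \<Rightarrow> nat \<Rightarrow> real" where
  "U_bound n \<delta> k = real k / real n + 3/4 *
     ((1 - 2 * real k / real n
        + sqrt (1 + 9 / (2 * ln (2 / \<delta>)) * real k * (1 - real k / real n)))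
      / (1 + 9 * real n / (8 * ln (2 / \<delta>))))"

definition coverage :: "nat \<Rightarrow> real \<Rightarrow> real \<Rightarrow> real" where
  "coverage n p \<delta> = measure_pmf.prob (binomial_pmf n p)
     {k. L_bound n \<delta> k \<le> p \<and> p \<le> U_bound n \<delta> k}"

end

theory Submission
  imports Defs
begin

text \<open>With x = K/n, the limits depend on \<delta> only through t = 9n/(8 ln(2/\<delta>)), which increases
  with \<delta>, and they are the two roots in p of
  (1 + t)(p - x)^2 - 3/2 (1 - 2x)(p - x) - 9/4 x(1 - x).
  Increasing t only increases this quadratic, so the event {L \<le> p \<le> U} shrinks pointwise in K
  as \<delta> grows, and its probability decreases.\<close>

lemma quadratic_le_0_iff_between_roots:
  fixes a b c y :: real
  assumes a: "a > 0" and disc: "b\<^sup>2 - 4*a*c \<ge> 0"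
  shows "((-b - sqrt (b\<^sup>2 - 4*a*c)) / (2*a) \<le> y \<and> y \<le> (-b + sqrt (b\<^sup>2 - 4*a*c)) / (2*a))
         \<longleftrightarrow> a*y\<^sup>2 + b*y + c \<le> 0"
proof -
  define s where "s = sqrt (b\<^sup>2 - 4*a*c)"
  define r1 where "r1 = (-b - s) / (2*a)"
  define r2 where "r2 = (-b + s) / (2*a)"
  have "s \<ge> 0" and s2: "s\<^sup>2 = b\<^sup>2 - 4*a*c"
    unfolding s_def using disc by simp_all
  then have "r1 \<le> r2"
    unfolding r1_def r2_def using a by (simp add: divide_right_mono)
  have factor: "a*y\<^sup>2 + b*y + c = a * ((y - r1) * (y - r2))"
    unfolding r1_def r2_def using a s2
    by (simp add: field_simps power2_eq_square) (metis distrib_left)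
  have "(r1 \<le> y \<and> y \<le> r2) \<longleftrightarrow> (y - r1) * (y - r2) \<le> 0"
    using \<open>r1 \<le> r2\<close> by (auto simp: mult_le_0_iff)
  also have "\<dots> \<longleftrightarrow> a * ((y - r1) * (y - r2)) \<le> 0"
    using a by (simp add: mult_le_0_iff)
  finally show ?thesis
    using factor unfolding r1_def r2_def s_def by simp
qed

definition score_lower :: "real \<Rightarrow> real \<Rightarrow> real" where
  "score_lower t x = x + 3/4 * ((1 - 2*x - sqrt (1 + 4*t*x*(1 - x))) / (1 + t))"

definition score_upper :: "real \<Rightarrow> real \<Rightarrow> real" where
  "score_upper t x = x + 3/4 * ((1 - 2*x + sqrt (1 + 4*t*x*(1 - x))) / (1 + t))"

lemma between_score_bounds_iff:
  fixes t x p :: real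
  assumes "0 < 1 + t" and "0 \<le> 1 + 4*t*x*(1 - x)"
  shows "(score_lower t x \<le> p \<and> p \<le> score_upper t x) \<longleftrightarrow>
    (1 + t) * (p - x)\<^sup>2 - 3/2 * (1 - 2*x) * (p - x) - 9/4 * x * (1 - x) \<le> 0"
proof -
  define a where "a = 1 + t"
  define b where "b = -3/2 * (1 - 2*x)"
  define c where "c = -9/4 * x * (1 - x)"
  have disc: "b\<^sup>2 - 4*a*c = 9/4 * (1 + 4*t*x*(1 - x))"
    unfolding a_def b_def c_def by (simp add: power2_eq_square field_simps)
  have "sqrt (9/4 :: real) = 3/2"
    by (rule real_sqrt_unique) (auto simp: power2_eq_square)
  then have sqrt_disc: "sqrt (b\<^sup>2 - 4*a*c) = 3/2 * sqrt (1 + 4*t*x*(1 - x))"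
    unfolding disc real_sqrt_mult by simp
  have "score_lower t x = x + (-b - sqrt (b\<^sup>2 - 4*a*c)) / (2*a)"
    and "score_upper t x = x + (-b + sqrt (b\<^sup>2 - 4*a*c)) / (2*a)"
    unfolding sqrt_disc unfolding score_lower_def score_upper_def a_def b_def
    using assms(1) by (simp_all add: field_simps)
  then have "(score_lower t x \<le> p \<and> p \<le> score_upper t x) \<longleftrightarrow>
      ((-b - sqrt (b\<^sup>2 - 4*a*c)) / (2*a) \<le> p - x \<and> p - x \<le> (-b + sqrt (b\<^sup>2 - 4*a*c)) / (2*a))"
    by linarith
  also have "\<dots> \<longleftrightarrow> a*(p - x)\<^sup>2 + b*(p - x) + c \<le> 0"
    using assms by (intro quadratic_le_0_iff_between_roots) (simp_all only: disc, simp_all add: a_def)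
  finally show ?thesis
    unfolding a_def b_def c_def by simp
qed

lemma between_score_bounds_antimono:
  fixes t t' x p :: real
  assumes "0 \<le> t" "t \<le> t'" "0 \<le> x" "x \<le> 1"
    and "score_lower t' x \<le> p \<and> p \<le> score_upper t' x"
  shows "score_lower t x \<le> p \<and> p \<le> score_upper t x"
proof -
  have "0 \<le> t*x*(1 - x)" and "0 \<le> t'*x*(1 - x)"
    using assms by simp_all
  then have iff: "\<And>s. s \<in> {t, t'} \<Longrightarrow> (score_lower s x \<le> p \<and> p \<le> score_upper s x) \<longleftrightarrow>
      (1 + s) * (p - x)\<^sup>2 - 3/2 * (1 - 2*x) * (p - x) - 9/4 * x * (1 - x) \<le> 0"
    using assms(1,2) by (intro between_score_bounds_iff) auto
  have "(1 + t) * (p - x)\<^sup>2 \<le> (1 + t') * (p - x)\<^sup>2"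
    using assms(2) by (intro mult_right_mono) auto
  then show ?thesis
    using iff[of t] iff[of t'] assms(5) by auto
qed

lemma L_bound_eq_score_lower:
  assumes "n > 0"
  shows "L_bound n \<delta> k = score_lower (9 * real n / (8 * ln (2/\<delta>))) (real k / real n)"
  using assms unfolding L_bound_def score_lower_def by (simp add: field_simps)

lemma U_bound_eq_score_upper:
  assumes "n > 0"
  shows "U_bound n \<delta> k = score_upper (9 * real n / (8 * ln (2/\<delta>))) (real k / real n)"
  using assms unfolding U_bound_def score_upper_def by (simp add: field_simps)

lemma measure_pmf_prob_mono_on_set_pmf:
  assumes "\<And>x. x \<in> set_pmf M \<Longrightarrow> x \<in> A \<Longrightarrow> x \<in> B"
  shows "measure_pmf.prob M A \<le> measure_pmf.prob M B"
proof -
  have "measure_pmf.prob M A = measure_pmf.prob M (A \<inter> set_pmf M)"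
    by (simp add: measure_Int_set_pmf)
  also have "\<dots> \<le> measure_pmf.prob M (B \<inter> set_pmf M)"
    using assms by (intro measure_pmf.finite_measure_mono) auto
  also have "\<dots> = measure_pmf.prob M B"
    by (simp add: measure_Int_set_pmf)
  finally show ?thesis .
qed

theorem theorem1:
  fixes n :: nat and p \<delta>1 \<delta>2 :: real
  assumes "n \<ge> 1" and "0 < p" and "p < 1"
    and "0 < \<delta>1" and "\<delta>1 \<le> \<delta>2" and "\<delta>2 < 1"
  shows "coverage n p \<delta>2 \<le> coverage n p \<delta>1"
  unfolding coverage_def
proof (rule measure_pmf_prob_mono_on_set_pmf, safe)
  fix k assume "k \<in> set_pmf (binomial_pmf n p)"
  then have "k \<le> n"
    using assms by (simp add: set_pmf_binomial)
  then have x: "0 \<le> real k / real n" "real k / real n \<le> 1"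
    using assms(1) by simp_all
  have ln_pos: "0 < ln (2/\<delta>2)"
    using assms by (simp add: field_simps)
  have "ln (2/\<delta>2) \<le> ln (2/\<delta>1)"
    using assms by (simp add: frac_le)
  then have t: "0 \<le> 9 * real n / (8 * ln (2/\<delta>1))"
    "9 * real n / (8 * ln (2/\<delta>1)) \<le> 9 * real n / (8 * ln (2/\<delta>2))"
    using ln_pos by (auto intro: divide_left_mono)
  assume "L_bound n \<delta>2 k \<le> p" "p \<le> U_bound n \<delta>2 k"
  then show "L_bound n \<delta>1 k \<le> p" "p \<le> U_bound n \<delta>1 k"
    using between_score_bounds_antimono[OF t x] assms(1)
    by (simp_all add: L_bound_eq_score_lower U_bound_eq_score_upper)
qed

end
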